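(* Let $Q_1=\{q_1<q_2<q_3<\cdots\}$ and $Q_2=\{v_1<v_2<v_3<\cdots\}$ be sets of prime powers (greater than 1), the elements within each set being pairwise coprime. Let $S_1$ be the set of integers $q_1^{e_1}\cdots q_s^{e_s}$ with $s\ge0$, $q_i\in Q_1$, $e_i\in\mathbb Z_{\ge0}$, and $S_2$ likewise with $Q_2$. Let $\pi_i(x)=\#\{q\in Q_i:q\le x\}$. Let $h:\mathbb N\to\mathbb R_{\ge0}$ be non-increasing and put $V_i(x)=\sum_{n\in S_i,\ n\le x}h(n)$ for $i=1,2$. Then: (a) if $\pi_1(x)\ge\pi_2(x)$ for all $x\ge0$, then $V_1(x)\ge V_2(x)$ for all $x\ge0$; (b) if $x_0$ is a real number and $\pi_1(x)\ge\pi_2(x)$ for all $x\le x_0$, then $V_1(x)\ge V_2(x)$ for all $x\le x_0$. *)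

theory Defs
  imports Complex_Main "HOL-Number_Theory.Prime_Powers" "HOL-Library.Multiset"
begin

definition gen_set :: "nat set \<Rightarrow> nat set" where
  "gen_set Q = {prod_mset M | M. set_mset M \<subseteq> Q}"

definition count_upto :: "nat set \<Rightarrow> real \<Rightarrow> nat" where
  "count_upto Q x = card {q \<in> Q. real q \<le> x}"

definition Vsum :: "(nat \<Rightarrow> real) \<Rightarrow> nat set \<Rightarrow> real \<Rightarrow> real" where
  "Vsum h S x = (\<Sum>n \<in> {n \<in> S. real n \<le> x}. h n)"

end

theory Submission
  imports Defs
begin

text \<open>Since \<open>\<pi>\<^sub>2 \<le> \<pi>\<^sub>1\<close> up to \<open>x\<close>, a greedy (Hall-type) matching sends the elements of
  \<open>Q\<^sub>2\<close> up to \<open>x\<close> injectively to elements of \<open>Q\<^sub>1\<close> that are not larger. Extending it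
  multiplicatively gives a map from \<open>S\<^sub>2 \<inter> [1, x]\<close> to \<open>S\<^sub>1 \<inter> [1, x]\<close> that does not increase
  numbers, and it is injective because products of pairwise coprime prime powers determine
  their factors. As \<open>h\<close> is non-increasing and non-negative,
  \<open>V\<^sub>2(x) \<le> \<Sum> h(\<Phi> n) \<le> V\<^sub>1(x)\<close>.\<close>

lemma zero_notin_if_primepows: "\<forall>q\<in>Q. primepow q \<Longrightarrow> 0 \<notin> Q"
  using primepow_gt_Suc_0 by force

lemma multiplicity_prod_mset_primepow:
  fixes M :: "nat multiset"
  assumes "set_mset M \<subseteq> Q" "0 \<notin> Q" "prime p" "k > 0"
    and "\<forall>r\<in>Q. r \<noteq> p ^ k \<longrightarrow> \<not> p dvd r"
  shows "multiplicity p (prod_mset M) = count M (p ^ k) * k"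
  using assms(1)
proof (induction M)
  case empty
  then show ?case by simp
next
  case (add r M)
  then have "r \<in> Q" "prod_mset M \<noteq> 0" using assms(2) by auto
  moreover have "r \<noteq> 0" using \<open>r \<in> Q\<close> assms(2) by metis
  moreover have "multiplicity p r = (if r = p ^ k then k else 0)"
    using assms(3,5) \<open>r \<in> Q\<close> by (auto simp: multiplicity_same_power not_dvd_imp_multiplicity_0)
  ultimately show ?case
    using add assms(3) by (simp add: prime_elem_multiplicity_mult_distrib)
qed

lemma prod_mset_eq_imp_eq_coprime_primepows:
  fixes M N :: "nat multiset"
  assumes pp: "\<forall>q\<in>Q. primepow q"
    and cop: "\<forall>a\<in>Q. \<forall>b\<in>Q. a \<noteq> b \<longrightarrow> coprime a b"
    and M: "set_mset M \<subseteq> Q" and N: "set_mset N \<subseteq> Q"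
    and eq: "prod_mset M = prod_mset N"
  shows "M = N"
proof (rule multiset_eqI)
  fix q
  show "count M q = count N q"
  proof (cases "q \<in> Q")
    case False
    then show ?thesis using M N by (metis count_eq_zero_iff subsetD)
  next
    case True
    then obtain p k where pk: "prime p" "k > 0" "q = p ^ k"
      using pp primepow_def by blast
    have "0 \<notin> Q" using pp by (rule zero_notin_if_primepows)
    have "\<not> p dvd r" if "r \<in> Q" "r \<noteq> p ^ k" for r
    proof
      assume "p dvd r"
      moreover have "p dvd q" using pk by simp
      moreover have "coprime r q" using cop True that pk(3) by blast
      ultimately show False using pk by (meson coprime_common_divisor not_prime_unit)
    qed
    then have "count M q * k = count N q * k"
      using multiplicity_prod_mset_primepow[OF M \<open>0 \<notin> Q\<close> pk(1,2)]
        multiplicity_prod_mset_primepow[OF N \<open>0 \<notin> Q\<close> pk(1,2)] eq pk by simp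
    then show ?thesis using pk(2) by simp
  qed
qed

lemma image_mset_inj_on_eq:
  assumes "image_mset f M = image_mset f N" "inj_on f (set_mset M \<union> set_mset N)"
  shows "M = N"
  using image_mset_eq_image_mset_plusD[of f M N "{#}"] assms by auto

lemma prod_mset_image_le:
  fixes M :: "nat multiset"
  assumes "\<forall>v\<in>#M. f v \<le> v"
  shows "prod_mset (image_mset f M) \<le> prod_mset M"
  using assms by (induction M) (auto intro: mult_le_mono)

lemma zero_notin_gen_set: "0 \<notin> Q \<Longrightarrow> 0 \<notin> gen_set Q"
  unfolding gen_set_def by auto

lemma gen_set_le_subset:
  assumes "0 \<notin> Q"
  shows "{n \<in> gen_set Q. real n \<le> x} \<subseteq> gen_set {q \<in> Q. real q \<le> x}"
proof
  fix n assume n: "n \<in> {n \<in> gen_set Q. real n \<le> x}"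
  then obtain M where M: "set_mset M \<subseteq> Q" "n = prod_mset M"
    unfolding gen_set_def by blast
  then have "n \<noteq> 0" using assms by auto
  then have "v \<le> n" if "v \<in># M" for v
    using that M(2) dvd_prod_mset[of v M] by (metis dvd_imp_le gr0I)
  moreover have "real n \<le> x" using n by simp
  ultimately have "real v \<le> x" if "v \<in># M" for v
    using that by (meson of_nat_le_iff order.trans)
  then show "n \<in> gen_set {q \<in> Q. real q \<le> x}"
    using M unfolding gen_set_def by blast
qed

text \<open>The matching pairs the least element of \<open>A\<close> with the least element of \<open>B\<close> and
  recurses on the remaining sets, for which the counting condition persists.\<close>
lemma exists_inj_below_if_card_le:
  fixes A B :: "'a::linorder set"
  assumes "finite A" "finite B" "\<forall>y. card {a\<in>A. a \<le> y} \<le> card {b\<in>B. b \<le> y}"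
  shows "\<exists>\<psi>. inj_on \<psi> A \<and> \<psi> ` A \<subseteq> B \<and> (\<forall>a\<in>A. \<psi> a \<le> a)"
  using assms
proof (induction "card A" arbitrary: A B)
  case 0
  then show ?case by auto
next
  case (Suc n)
  define a0 where "a0 = Min A"
  define b0 where "b0 = Min B"
  have "A \<noteq> {}" using Suc.hyps(2) by auto
  then have a0: "a0 \<in> A" "\<forall>a\<in>A. a0 \<le> a" using Suc.prems a0_def by auto
  then have "0 < card {a\<in>A. a \<le> a0}" using Suc.prems(1) by (auto simp: card_gt_0_iff)
  then have "0 < card {b\<in>B. b \<le> a0}" using Suc.prems(3) by (meson order.strict_trans2)
  then obtain b where "b \<in> B" "b \<le> a0" by (auto simp: card_gt_0_iff)
  then have "B \<noteq> {}" by auto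
  then have b0: "b0 \<in> B" "\<forall>b\<in>B. b0 \<le> b"
    using Suc.prems(2) b0_def by auto
  have "b0 \<le> a0" using b0(2) \<open>b \<in> B\<close> \<open>b \<le> a0\<close> by (meson order.trans)
  define A' where "A' = A - {a0}"
  define B' where "B' = B - {b0}"
  have "\<forall>y. card {a\<in>A'. a \<le> y} \<le> card {b\<in>B'. b \<le> y}"
  proof
    fix y
    show "card {a\<in>A'. a \<le> y} \<le> card {b\<in>B'. b \<le> y}"
    proof (cases "a0 \<le> y")
      case True
      have "card {a\<in>A'. a \<le> y} = card {a\<in>A. a \<le> y} - 1"
        using True a0 Suc.prems(1) unfolding A'_def
        by (subst card_Diff_singleton[symmetric]) (auto intro: arg_cong[where f = card])
      moreover have "card {b\<in>B'. b \<le> y} = card {b\<in>B. b \<le> y} - 1"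
        using True b0 \<open>b0 \<le> a0\<close> Suc.prems(2) unfolding B'_def
        by (subst card_Diff_singleton[symmetric]) (auto intro: arg_cong[where f = card])
      ultimately show ?thesis using Suc.prems(3) by (metis diff_le_mono)
    next
      case False
      then have "{a\<in>A'. a \<le> y} = {}" using a0 unfolding A'_def by auto
      then show ?thesis by (metis card.empty le0)
    qed
  qed
  moreover have "n = card A'" "finite A'" "finite B'"
    using Suc.hyps(2) Suc.prems a0 unfolding A'_def B'_def by auto
  ultimately obtain \<psi> where \<psi>: "inj_on \<psi> A'" "\<psi> ` A' \<subseteq> B'" "\<forall>a\<in>A'. \<psi> a \<le> a"
    using Suc.hyps(1) by blast
  have "A = insert a0 A'" "a0 \<notin> A'" "b0 \<notin> B'" using a0 unfolding A'_def B'_def by auto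
  then have "inj_on (\<psi>(a0 := b0)) A" "\<psi>(a0 := b0) ` A \<subseteq> B" "\<forall>a\<in>A. (\<psi>(a0 := b0)) a \<le> a"
    using \<psi> b0 \<open>b0 \<le> a0\<close> unfolding B'_def by (auto simp: inj_on_def)
  then show ?case by blast
qed

text \<open>The multiplicative extension \<open>\<Phi>(\<Prod>M) = \<Prod>\<psi>(M)\<close>; it does not matter which factorisation
  \<open>M\<close> over \<open>A\<close> is chosen, since injectivity only needs unique factorisation over \<open>Q\<close>.\<close>
lemma exists_inj_below_gen_set:
  assumes pp: "\<forall>q\<in>Q. primepow q"
    and cop: "\<forall>a\<in>Q. \<forall>b\<in>Q. a \<noteq> b \<longrightarrow> coprime a b"
    and \<psi>: "inj_on \<psi> A" "\<psi> ` A \<subseteq> Q" "\<forall>a\<in>A. \<psi> a \<le> a"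
  shows "\<exists>\<Phi>. inj_on \<Phi> (gen_set A) \<and> \<Phi> ` gen_set A \<subseteq> gen_set Q \<and> (\<forall>n\<in>gen_set A. \<Phi> n \<le> n)"
proof -
  define factors where "factors n = (SOME M. set_mset M \<subseteq> A \<and> prod_mset M = n)" for n
  define \<Phi> where "\<Phi> n = prod_mset (image_mset \<psi> (factors n))" for n
  have factors: "set_mset (factors n) \<subseteq> A" "prod_mset (factors n) = n" if "n \<in> gen_set A" for n
  proof -
    have "\<exists>M. set_mset M \<subseteq> A \<and> prod_mset M = n" using that unfolding gen_set_def by auto
    then have "set_mset (factors n) \<subseteq> A \<and> prod_mset (factors n) = n"
      unfolding factors_def by (rule someI_ex)
    then show "set_mset (factors n) \<subseteq> A" "prod_mset (factors n) = n" by auto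
  qed
  have image_in_Q: "set_mset (image_mset \<psi> (factors n)) \<subseteq> Q" if "n \<in> gen_set A" for n
    using factors(1)[OF that] \<psi>(2) by auto
  have "inj_on \<Phi> (gen_set A)"
  proof (rule inj_onI)
    fix n n' assume n: "n \<in> gen_set A" "n' \<in> gen_set A" "\<Phi> n = \<Phi> n'"
    then have "image_mset \<psi> (factors n) = image_mset \<psi> (factors n')"
      using prod_mset_eq_imp_eq_coprime_primepows[OF pp cop image_in_Q image_in_Q]
      unfolding \<Phi>_def by blast
    moreover have "inj_on \<psi> (set_mset (factors n) \<union> set_mset (factors n'))"
      using \<psi>(1) factors(1) n(1,2) by (auto intro: inj_on_subset)
    ultimately have "factors n = factors n'" by (rule image_mset_inj_on_eq)
    then show "n = n'" using factors(2) n(1,2) by metis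
  qed
  moreover have "\<Phi> ` gen_set A \<subseteq> gen_set Q"
    using image_in_Q unfolding \<Phi>_def gen_set_def by blast
  moreover have "\<Phi> n \<le> n" if "n \<in> gen_set A" for n
    using prod_mset_image_le[of "factors n" \<psi>] factors[OF that] \<psi>(3) unfolding \<Phi>_def by auto
  ultimately show ?thesis by blast
qed

lemma sum_le_sum_inj_below:
  fixes h :: "'a::order \<Rightarrow> 'b::ordered_comm_monoid_add"
  assumes "finite T" "inj_on \<Phi> S" "\<Phi> ` S \<subseteq> T" "\<forall>n\<in>S. \<Phi> n \<le> n"
    and "\<forall>m\<in>T. \<forall>n. m \<le> n \<longrightarrow> h n \<le> h m" "\<forall>m\<in>T. 0 \<le> h m"
  shows "sum h S \<le> sum h T"
proof -
  have "sum h S \<le> (\<Sum>n\<in>S. h (\<Phi> n))"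
    using assms(3-5) by (intro sum_mono) auto
  also have "\<dots> = sum h (\<Phi> ` S)"
    using assms(2) by (simp add: sum.reindex)
  also have "\<dots> \<le> sum h T"
    using assms(1,3,6) by (intro sum_mono2) auto
  finally show ?thesis .
qed

lemma finite_nat_le_real: "finite {n::nat. P n \<and> real n \<le> x}"
  by (metis (lifting) dual_order.trans finite_nat_set_iff_bounded_le mem_Collect_eq of_nat_le_iff
      real_arch_simple)

lemma count_upto_le_imp_exists_inj_below:
  assumes "\<forall>y\<le>x. count_upto Q2 y \<le> count_upto Q1 y"
  shows "\<exists>\<psi>. inj_on \<psi> {q\<in>Q2. real q \<le> x} \<and> \<psi> ` {q\<in>Q2. real q \<le> x} \<subseteq> Q1 \<and>
    (\<forall>q\<in>{q\<in>Q2. real q \<le> x}. \<psi> q \<le> q)"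
proof -
  define A where "A = {q\<in>Q2. real q \<le> x}"
  define B where "B = {q\<in>Q1. real q \<le> x}"
  have "\<forall>y. card {a\<in>A. a \<le> y} \<le> card {b\<in>B. b \<le> y}"
  proof
    fix y
    have "{a\<in>A. a \<le> y} = {q\<in>Q2. real q \<le> min x y}" "{b\<in>B. b \<le> y} = {q\<in>Q1. real q \<le> min x y}"
      unfolding A_def B_def by auto
    moreover have "count_upto Q2 (min x y) \<le> count_upto Q1 (min x y)"
      using assms by simp
    ultimately show "card {a\<in>A. a \<le> y} \<le> card {b\<in>B. b \<le> y}"
      by (simp only: count_upto_def)
  qed
  moreover have "finite A" "finite B"
    unfolding A_def B_def by (rule finite_nat_le_real)+
  ultimately obtain \<psi> where "inj_on \<psi> A" "\<psi> ` A \<subseteq> B" "\<forall>a\<in>A. \<psi> a \<le> a"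
    using exists_inj_below_if_card_le[of A B] by auto
  moreover have "B \<subseteq> Q1" unfolding B_def by blast
  ultimately show ?thesis unfolding A_def by blast
qed

lemma Vsum_gen_set_le:
  fixes Q1 Q2 :: "nat set" and h :: "nat \<Rightarrow> real" and x :: real
  assumes pp1: "\<forall>q\<in>Q1. primepow q"
    and cop1: "\<forall>a\<in>Q1. \<forall>b\<in>Q1. a \<noteq> b \<longrightarrow> coprime a b"
    and "0 \<notin> Q2"
    and hnonneg: "\<forall>n>0. h n \<ge> 0"
    and hmono: "\<forall>m n. 0 < m \<longrightarrow> m \<le> n \<longrightarrow> h n \<le> h m"
    and count_le: "\<forall>y\<le>x. count_upto Q2 y \<le> count_upto Q1 y"
  shows "Vsum h (gen_set Q2) x \<le> Vsum h (gen_set Q1) x"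
proof -
  define A where "A = {q\<in>Q2. real q \<le> x}"
  define T1 where "T1 = {n \<in> gen_set Q1. real n \<le> x}"
  define T2 where "T2 = {n \<in> gen_set Q2. real n \<le> x}"
  obtain \<psi> where \<psi>: "inj_on \<psi> A" "\<psi> ` A \<subseteq> Q1" "\<forall>a\<in>A. \<psi> a \<le> a"
    using count_upto_le_imp_exists_inj_below[OF count_le] unfolding A_def by blast
  then obtain \<Phi> where \<Phi>: "inj_on \<Phi> (gen_set A)" "\<Phi> ` gen_set A \<subseteq> gen_set Q1"
      "\<forall>n\<in>gen_set A. \<Phi> n \<le> n"
    using exists_inj_below_gen_set[OF pp1 cop1 \<psi>] by auto
  have "0 \<notin> Q1" using pp1 by (rule zero_notin_if_primepows)
  have "T2 \<subseteq> gen_set A"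
    unfolding T2_def A_def by (rule gen_set_le_subset[OF \<open>0 \<notin> Q2\<close>])
  then have \<Phi>_T2: "inj_on \<Phi> T2" "\<forall>n\<in>T2. \<Phi> n \<le> n" "\<Phi> ` T2 \<subseteq> gen_set Q1"
    using \<Phi> by (auto intro: inj_on_subset)
  moreover have "real (\<Phi> n) \<le> x" if "n \<in> T2" for n
  proof -
    have "\<Phi> n \<le> n" "real n \<le> x" using \<Phi>_T2(2) that unfolding T2_def by auto
    then show ?thesis by linarith
  qed
  then have "\<Phi> ` T2 \<subseteq> T1" using \<Phi>_T2(3) unfolding T1_def by auto
  moreover have "finite T1" unfolding T1_def by (rule finite_nat_le_real)
  moreover have "0 < m" if "m \<in> T1" for m
    using that zero_notin_gen_set[OF \<open>0 \<notin> Q1\<close>] unfolding T1_def by (metis gr0I mem_Collect_eq)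
  then have "\<forall>m\<in>T1. \<forall>n. m \<le> n \<longrightarrow> h n \<le> h m" "\<forall>m\<in>T1. 0 \<le> h m"
    using hmono hnonneg by simp_all
  ultimately have "sum h T2 \<le> sum h T1"
    by (intro sum_le_sum_inj_below[of T1 \<Phi> T2 h])
  then show ?thesis unfolding Vsum_def T1_def T2_def .
qed

theorem lemma11:
  fixes Q1 Q2 :: "nat set" and h :: "nat \<Rightarrow> real"
  assumes pp1: "\<forall>q\<in>Q1. primepow q"
    and pp2: "\<forall>q\<in>Q2. primepow q"
    and cop1: "\<forall>a\<in>Q1. \<forall>b\<in>Q1. a \<noteq> b \<longrightarrow> coprime a b"
    and cop2: "\<forall>a\<in>Q2. \<forall>b\<in>Q2. a \<noteq> b \<longrightarrow> coprime a b"
    and hnonneg: "\<forall>n>0. h n \<ge> 0"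
    and hmono: "\<forall>m n. 0 < m \<longrightarrow> m \<le> n \<longrightarrow> h n \<le> h m"
  shows "((\<forall>x\<ge>0. count_upto Q1 x \<ge> count_upto Q2 x) \<longrightarrow>
            (\<forall>x\<ge>0. Vsum h (gen_set Q1) x \<ge> Vsum h (gen_set Q2) x))
       \<and> (\<forall>x0::real. (\<forall>x\<le>x0. count_upto Q1 x \<ge> count_upto Q2 x) \<longrightarrow>
            (\<forall>x\<le>x0. Vsum h (gen_set Q1) x \<ge> Vsum h (gen_set Q2) x))"
proof -
  note Vsum_le = Vsum_gen_set_le[OF pp1 cop1 zero_notin_if_primepows[OF pp2] hnonneg hmono]
  have count_upto_neg: "count_upto Q2 y = 0" if "y < 0" for y
    using that unfolding count_upto_def by (auto intro: arg_cong[where f = card])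
  show ?thesis
  proof (intro conjI impI allI)
    fix x :: real
    assume "\<forall>x\<ge>0. count_upto Q1 x \<ge> count_upto Q2 x"
    then have "\<forall>y\<le>x. count_upto Q2 y \<le> count_upto Q1 y"
      using count_upto_neg by (metis le0 not_le)
    then show "Vsum h (gen_set Q1) x \<ge> Vsum h (gen_set Q2) x" by (rule Vsum_le)
  next
    fix x0 x :: real
    assume "\<forall>x\<le>x0. count_upto Q1 x \<ge> count_upto Q2 x" "x \<le> x0"
    then show "Vsum h (gen_set Q1) x \<ge> Vsum h (gen_set Q2) x" by (intro Vsum_le) auto
  qed
qed

end
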